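(* Let $G$ be a graph with no induced subgraph isomorphic to $C_4$. Then a clique of $G$ is strong if and only if it is simplicial.
   Context: A clique is strong if it intersects every maximal independent set. A clique $C$ of $G$ is simplicial if there is a vertex $v\in V(G)$ with $C=N[v]$, the closed neighborhood of $v$. *)

theory Defs
  imports Main
begin

definition graph :: "'a set \<Rightarrow> ('a \<Rightarrow> 'a \<Rightarrow> bool) \<Rightarrow> bool" where
  "graph V E \<longleftrightarrow> finite V \<and> (\<forall>x y. E x y \<longrightarrow> x \<in> V \<and> y \<in> V)
     \<and> (\<forall>x y. E x y \<longrightarrow> E y x) \<and> (\<forall>x. \<not> E x x)"

definition clique :: "'a set \<Rightarrow> ('a \<Rightarrow> 'a \<Rightarrow> bool) \<Rightarrow> 'a set \<Rightarrow> bool" where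
  "clique V E C \<longleftrightarrow> C \<subseteq> V \<and> (\<forall>x\<in>C. \<forall>y\<in>C. x \<noteq> y \<longrightarrow> E x y)"

definition independent :: "'a set \<Rightarrow> ('a \<Rightarrow> 'a \<Rightarrow> bool) \<Rightarrow> 'a set \<Rightarrow> bool" where
  "independent V E S \<longleftrightarrow> S \<subseteq> V \<and> (\<forall>x\<in>S. \<forall>y\<in>S. \<not> E x y)"

definition maximal_independent :: "'a set \<Rightarrow> ('a \<Rightarrow> 'a \<Rightarrow> bool) \<Rightarrow> 'a set \<Rightarrow> bool" where
  "maximal_independent V E S \<longleftrightarrow> independent V E S \<and>
     (\<forall>T. independent V E T \<and> S \<subseteq> T \<longrightarrow> T = S)"

definition strong_clique :: "'a set \<Rightarrow> ('a \<Rightarrow> 'a \<Rightarrow> bool) \<Rightarrow> 'a set \<Rightarrow> bool" where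
  "strong_clique V E C \<longleftrightarrow> clique V E C \<and>
     (\<forall>S. maximal_independent V E S \<longrightarrow> C \<inter> S \<noteq> {})"

definition closed_nbhd :: "'a set \<Rightarrow> ('a \<Rightarrow> 'a \<Rightarrow> bool) \<Rightarrow> 'a \<Rightarrow> 'a set" where
  "closed_nbhd V E v = {u\<in>V. E v u} \<union> {v}"

definition simplicial_clique :: "'a set \<Rightarrow> ('a \<Rightarrow> 'a \<Rightarrow> bool) \<Rightarrow> 'a set \<Rightarrow> bool" where
  "simplicial_clique V E C \<longleftrightarrow> clique V E C \<and> (\<exists>v\<in>V. C = closed_nbhd V E v)"

definition C4_free :: "'a set \<Rightarrow> ('a \<Rightarrow> 'a \<Rightarrow> bool) \<Rightarrow> bool" where
  "C4_free V E \<longleftrightarrow> \<not> (\<exists>a\<in>V. \<exists>b\<in>V. \<exists>c\<in>V. \<exists>d\<in>V. distinct [a,b,c,d] \<and>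
      E a b \<and> E b c \<and> E c d \<and> E d a \<and> \<not> E a c \<and> \<not> E b d)"

end

theory Submission
  imports Defs
begin

text \<open>
  A maximal independent set missing N[v] could be enlarged by v, so simplicial cliques are
  strong in every graph. Conversely, let C be a clique that is not simplicial, so every vertex
  of C has a neighbour outside C. Without induced C4, adjacent vertices u, w outside C have
  comparable neighbourhoods in C (otherwise a, u, w, d with a adjacent to u only and d
  adjacent to w only would induce a C4). Hence greedily choosing outside vertices with
  inclusion-maximal neighbourhoods among the not yet dominated vertices of C yields an
  independent set outside C dominating C; any maximal independent set containing it
  misses C, so C is not strong.
\<close>

lemma graph_adj_sym: "graph V E \<Longrightarrow> E x y \<Longrightarrow> E y x"
  by (simp add: graph_def)

lemma graph_adj_irrefl: "graph V E \<Longrightarrow> \<not> E x x"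
  by (simp add: graph_def)

lemma independent_insert:
  assumes "graph V E" and "independent V E S" and "u \<in> V" and "\<forall>w\<in>S. \<not> E u w"
  shows "independent V E (insert u S)"
  using assms graph_adj_sym[OF assms(1)] graph_adj_irrefl[OF assms(1)]
  unfolding independent_def by (metis insert_iff insert_subset)

lemma independent_extends_to_maximal:
  assumes "finite V" and "independent V E S"
  shows "\<exists>T. maximal_independent V E T \<and> S \<subseteq> T"
proof -
  let ?F = "{T. independent V E T \<and> S \<subseteq> T}"
  have "?F \<subseteq> Pow V"
    by (auto simp: independent_def)
  then have "finite ?F"
    using assms(1) by (meson finite_Pow_iff finite_subset)
  moreover have "S \<in> ?F" using assms(2) by simp
  ultimately obtain T where T: "T \<in> ?F" and T_max: "\<And>T'. T' \<in> ?F \<Longrightarrow> T \<subseteq> T' \<Longrightarrow> T = T'"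
    using finite_has_maximal2[of ?F S] by auto
  have "maximal_independent V E T"
    unfolding maximal_independent_def
  proof (intro conjI allI impI)
    show "independent V E T" using T by simp
    fix T' assume "independent V E T' \<and> T \<subseteq> T'"
    then show "T' = T" using T T_max[of T'] by auto
  qed
  then show ?thesis
    using T by auto
qed

lemma maximal_independent_meets_closed_nbhd:
  assumes "graph V E" and "maximal_independent V E S" and "v \<in> V"
  shows "closed_nbhd V E v \<inter> S \<noteq> {}"
proof
  assume miss: "closed_nbhd V E v \<inter> S = {}"
  have S: "independent V E S" and S_max: "\<And>T. independent V E T \<Longrightarrow> S \<subseteq> T \<Longrightarrow> T = S"
    using assms(2) unfolding maximal_independent_def by auto
  have "\<forall>x\<in>S. \<not> E v x"
    using miss S unfolding closed_nbhd_def independent_def by auto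
  then have "independent V E (insert v S)"
    using independent_insert[OF assms(1) S assms(3)] by simp
  then have "v \<in> S"
    using S_max by auto
  then show False
    using miss unfolding closed_nbhd_def by auto
qed

lemma simplicial_imp_strong_clique:
  assumes "graph V E" and "simplicial_clique V E C"
  shows "strong_clique V E C"
proof -
  obtain v where "clique V E C" "v \<in> V" "C = closed_nbhd V E v"
    using assms(2) unfolding simplicial_clique_def by auto
  then show ?thesis
    using maximal_independent_meets_closed_nbhd[OF assms(1)] unfolding strong_clique_def by simp
qed

lemma not_simplicial_clique_outside_neighbour:
  assumes "clique V E C" and "\<not> simplicial_clique V E C" and "v \<in> C"
  shows "\<exists>u\<in>V - C. E v u"
proof -
  have "C \<subseteq> closed_nbhd V E v"
    using assms(1,3) unfolding clique_def closed_nbhd_def by auto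
  moreover have "C \<noteq> closed_nbhd V E v"
    using assms unfolding simplicial_clique_def clique_def by auto
  ultimately obtain u where "u \<in> closed_nbhd V E v" and "u \<notin> C" by auto
  then show ?thesis
    using assms(3) unfolding closed_nbhd_def by auto
qed

lemma C4_free_clique_nbhds_comparable:
  assumes "graph V E" and "C4_free V E" and "clique V E C"
    and "u \<in> V - C" and "w \<in> V - C" and "E u w"
  shows "{c\<in>C. E u c} \<subseteq> {c\<in>C. E w c} \<or> {c\<in>C. E w c} \<subseteq> {c\<in>C. E u c}"
proof (rule ccontr)
  assume "\<not> ?thesis"
  then obtain a d where a: "a \<in> C" "E u a" "\<not> E w a" and d: "d \<in> C" "E w d" "\<not> E u d"
    by auto
  have "a \<noteq> d" using a d by auto
  then have "E d a"
    using a d assms(3) by (simp add: clique_def)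
  moreover have "a \<in> V" "d \<in> V"
    using a d assms(3) by (auto simp: clique_def)
  moreover have "E a u" "\<not> E a w"
    using a graph_adj_sym[OF assms(1)] by metis+
  moreover have "u \<noteq> w"
    using assms(6) graph_adj_irrefl[OF assms(1)] by metis
  ultimately have "distinct [a, u, w, d] \<and> E a u \<and> E u w \<and> E w d \<and> E d a \<and> \<not> E a w \<and> \<not> E u d"
    using a d assms(4-6) by auto
  then show False
    using assms(2,4,5) \<open>a \<in> V\<close> \<open>d \<in> V\<close> unfolding C4_free_def by (meson DiffD1)
qed

lemma C4_free_maximal_nbhd_nonadjacent:
  assumes "graph V E" and "C4_free V E" and "clique V E C" and "D \<subseteq> C"
    and "u \<in> V - C" and "w \<in> V - C"
    and u_max: "\<forall>x\<in>V - C. {d\<in>D. E u d} \<subseteq> {d\<in>D. E x d} \<longrightarrow> {d\<in>D. E u d} = {d\<in>D. E x d}"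
    and "d \<in> D" and "E w d" and "\<not> E u d"
  shows "\<not> E u w"
proof
  assume "E u w"
  then have "{d\<in>D. E u d} \<subseteq> {d\<in>D. E w d} \<or> {d\<in>D. E w d} \<subseteq> {d\<in>D. E u d}"
    using C4_free_clique_nbhds_comparable[OF assms(1-3,5,6)] assms(4) by auto
  moreover have "d \<in> {d\<in>D. E w d} - {d\<in>D. E u d}"
    using assms(8-10) by auto
  ultimately show False
    using u_max assms(6) by auto
qed

text \<open>
  Each chosen vertex keeps a neighbour among the vertices it was chosen to dominate; this
  neighbour is what keeps a later vertex from being adjacent to an earlier one.
\<close>

lemma C4_free_clique_dominating_independent:
  assumes "graph V E" and "C4_free V E" and "clique V E C"
    and "D \<subseteq> C" and "\<forall>d\<in>D. \<exists>u\<in>V - C. E d u"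
  shows "\<exists>S. independent V E S \<and> S \<inter> C = {} \<and> (\<forall>w\<in>S. \<exists>d\<in>D. E w d) \<and> (\<forall>d\<in>D. \<exists>w\<in>S. E d w)"
  using assms(4,5)
proof (induction "card D" arbitrary: D rule: less_induct)
  case less
  note sym = graph_adj_sym[OF assms(1)]
  have "finite V" using assms(1) by (simp add: graph_def)
  show ?case
  proof (cases "D = {}")
    case True
    then show ?thesis by (intro exI[of _ "{}"]) (simp add: independent_def)
  next
    case False
    define N where "N x = {d\<in>D. E x d}" for x
    obtain d0 where "d0 \<in> D"
      using False by auto
    then obtain u0 where "u0 \<in> V - C" "E d0 u0"
      using less.prems(2) by auto
    have "finite (N ` (V - C))"
      using \<open>finite V\<close> by simp
    then obtain u where u: "u \<in> V - C" "N u0 \<subseteq> N u"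
      and u_max: "\<forall>x\<in>V - C. N u \<subseteq> N x \<longrightarrow> N u = N x"
      using finite_has_maximal2[of "N ` (V - C)" "N u0"] \<open>u0 \<in> V - C\<close> by auto
    have "d0 \<in> N u"
      using u \<open>d0 \<in> D\<close> \<open>E d0 u0\<close> sym unfolding N_def by auto
    define D' where "D' = D - N u"
    have "finite D"
      using less.prems(1) assms(3) \<open>finite V\<close> unfolding clique_def by (meson finite_subset)
    then have "card D' < card D"
      unfolding D'_def using \<open>d0 \<in> N u\<close> N_def by (intro psubset_card_mono) auto
    moreover have "D' \<subseteq> C" "\<forall>d\<in>D'. \<exists>u\<in>V - C. E d u"
      using less.prems unfolding D'_def by auto
    ultimately obtain S' where S': "independent V E S'" "S' \<inter> C = {}"
      "\<forall>w\<in>S'. \<exists>d\<in>D'. E w d" "\<forall>d\<in>D'. \<exists>w\<in>S'. E d w"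
      using less.hyps[of D'] by auto
    have u_indep: "\<not> E u w" if "w \<in> S'" for w
    proof -
      have "w \<in> V - C"
        using that S'(1,2) unfolding independent_def by auto
      moreover obtain d' where "d' \<in> D" "E w d'" "\<not> E u d'"
        using S'(3) \<open>w \<in> S'\<close> unfolding D'_def N_def by auto
      ultimately show ?thesis
        using C4_free_maximal_nbhd_nonadjacent[OF assms(1-3) less.prems(1) u(1) _ u_max[unfolded N_def]]
        by simp
    qed
    show ?thesis
    proof (intro exI[of _ "insert u S'"] conjI)
      show "independent V E (insert u S')"
        using independent_insert[OF assms(1) S'(1)] u(1) u_indep by simp
      show "insert u S' \<inter> C = {}"
        using S'(2) u(1) by auto
      show "\<forall>w\<in>insert u S'. \<exists>d\<in>D. E w d"
        using S'(3) \<open>d0 \<in> N u\<close> unfolding D'_def N_def by auto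
      show "\<forall>d\<in>D. \<exists>w\<in>insert u S'. E d w"
        using S'(4) sym unfolding D'_def N_def by auto
    qed
  qed
qed

lemma dominating_independent_imp_not_strong:
  assumes "graph V E" and "independent V E S" and "\<forall>c\<in>C. \<exists>w\<in>S. E c w"
  shows "\<not> strong_clique V E C"
proof -
  have "finite V" using assms(1) by (simp add: graph_def)
  then obtain T where T: "maximal_independent V E T" "S \<subseteq> T"
    using independent_extends_to_maximal[OF _ assms(2)] by auto
  have "C \<inter> T = {}"
  proof (rule ccontr)
    assume "C \<inter> T \<noteq> {}"
    then obtain c where "c \<in> C" "c \<in> T" by auto
    moreover obtain w where "w \<in> S" "E c w"
      using assms(3) \<open>c \<in> C\<close> by auto
    ultimately show False
      using T unfolding maximal_independent_def independent_def by auto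
  qed
  then show ?thesis
    using T(1) unfolding strong_clique_def by auto
qed

lemma C4_free_strong_imp_simplicial_clique:
  assumes "graph V E" and "C4_free V E" and "strong_clique V E C"
  shows "simplicial_clique V E C"
proof (rule ccontr)
  assume "\<not> simplicial_clique V E C"
  moreover have "clique V E C"
    using assms(3) by (simp add: strong_clique_def)
  ultimately have "\<forall>c\<in>C. \<exists>u\<in>V - C. E c u"
    using not_simplicial_clique_outside_neighbour by auto
  then obtain S where "independent V E S" "\<forall>c\<in>C. \<exists>w\<in>S. E c w"
    using C4_free_clique_dominating_independent[OF assms(1,2) \<open>clique V E C\<close> order_refl] by auto
  then show False
    using dominating_independent_imp_not_strong[OF assms(1)] assms(3) by auto
qed

theorem mainTheorem9:
  assumes "graph V E" and "C4_free V E" and "clique V E C"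
  shows "strong_clique V E C \<longleftrightarrow> simplicial_clique V E C"
  using assms C4_free_strong_imp_simplicial_clique simplicial_imp_strong_clique by auto

end
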